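(* Let $a,d\in\mathbb{N}$ and $n,m\ge 1$. Consider the Pólya–Eggenberger urn with ball transition matrix $\begin{pmatrix}-a&0\\0&-d\end{pmatrix}$ started with $a n$ white and $d m$ black balls, and let $Y_{an,dm}$ be the number of white balls remaining when the process stops. Then for $0\le k\le n$, \[ \mathbb{P}\{Y_{an,dm}=ak\}=\sum_{\ell=1}^{m}(-1)^{\ell-1}\frac{\binom{m}{\ell}\binom{k-1+\frac{\ell d}{a}}{k}}{\binom{n+\frac{\ell d}{a}}{n}}=\sum_{\ell=k}^{n}(-1)^{\ell-k}\frac{\binom{n}{\ell}\binom{\ell}{k}}{\binom{m+\frac{\ell a}{d}}{m}}. \] Moreover, the normalized random variable $\hat Y_{an,dm}=Y_{an,dm}/a$ satisfies, for every integer $s\ge 1$, \[ \mathbb{E}\big(\hat Y_{an,dm}^{\underline{s}}\big)=\frac{n^{\underline{s}}}{\binom{m+\frac{as}{d}}{m}},\qquad \mathbb{E}\big(\hat Y_{an,dm}^{s}\big)=\sum_{j=0}^{s}{s\brace j}\frac{n^{\underline{j}}}{\binom{m+\frac{aj}{d}}{m}}. \]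
   Context: The urn: at each step one ball is drawn uniformly at random among all balls present; if it is white, the number of white balls decreases by $a$; if it is black, the number of black balls decreases by $d$ (so from $a n'$ white and $d m'$ black balls, a white ball is drawn with probability $an'/(an'+dm')$). The process stops as soon as the urn contains no white or no black balls; $Y_{an,dm}$ is the number of white balls at that time (so it is $0$ if whites are exhausted first). For real $x$ and integer $k\ge 0$, $x^{\underline{k}}=x(x-1)\cdots(x-k+1)$ denotes the falling factorial and $\binom{x}{k}=x^{\underline{k}}/k!$. ${s\brace j}$ denotes the Stirling numbers of the second kind. *)

theory Defs
  imports "HOL-Probability.Probability" "HOL-Combinatorics.Stirling"
begin

definition falling_fact :: "real \<Rightarrow> nat \<Rightarrow> real" where
  "falling_fact x k = (\<Prod>i<k. x - real i)"

text \<open>Distribution of the number of white balls remaining when the urn with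
  ball transition matrix diag(-a,-d), started with a*n white and d*m black balls,
  stops (no white or no black balls left).\<close>
fun urn :: "nat \<Rightarrow> nat \<Rightarrow> nat \<Rightarrow> nat \<Rightarrow> nat pmf" where
  "urn a d 0 m = return_pmf 0"
| "urn a d (Suc n) 0 = return_pmf (a * Suc n)"
| "urn a d (Suc n) (Suc m) =
     bind_pmf (bernoulli_pmf (real (a * Suc n) / real (a * Suc n + d * Suc m)))
       (\<lambda>white. if white then urn a d n (Suc m) else urn a d (Suc n) m)"

end

theory Submission
  imports Defs
begin

text \<open>
  First-step analysis: for every observable \<open>g\<close>, the expectation \<open>E(n, m)\<close> of \<open>g\<close> for the urn
  started with \<open>a n\<close> white and \<open>d m\<close> black balls satisfies
  \<open>E(n + 1, m + 1) = p E(n, m + 1) + (1 - p) E(n + 1, m)\<close> with \<open>p = a(n + 1) / (a(n + 1) + d(m + 1))\<close>,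
  and is determined by this recursion and its boundary values \<open>g 0\<close> and \<open>g (a n)\<close>.
  Whenever \<open>C (n + 1) (n + 1 - l) = C n (n + 1)\<close>, the quotient \<open>C n / binom(m + l a / d, m)\<close>
  solves the recursion. Taking for \<open>C n\<close> the falling factorial of \<open>n\<close> of order \<open>l = s\<close> gives the factorial
  moments; superposing \<open>C n = (-1)^(l - k) binom(n, l) binom(l, k)\<close> over \<open>l\<close> gives the distribution, whose
  boundary values reduce to an inclusion-exclusion identity. The power moments follow by
  expanding \<open>x ^ s\<close> in falling factorials with Stirling numbers, and the dual formula for the
  distribution from the partial fraction expansion of \<open>1 / binom(m + x, m)\<close> and a Beta sum.
\<close>

section \<open>Binomial identities\<close>

lemma gbinomial_of_nat_add_eq_pochhammer:
  fixes x :: "'a :: field_char_0"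
  shows "(of_nat m + x) gchoose m = pochhammer (x + 1) m / fact m"
  by (subst gbinomial_pochhammer') (simp add: algebra_simps)

lemma gbinomial_of_nat_add_pos:
  fixes x :: real
  assumes "x \<ge> 0"
  shows "(real m + x) gchoose m > 0"
  unfolding gbinomial_of_nat_add_eq_pochhammer using assms
  by (intro divide_pos_pos pochhammer_pos) auto

lemma gbinomial_of_nat_add_Suc:
  fixes x :: "'a :: field_char_0"
  shows "(of_nat (Suc m) + x) gchoose Suc m
    = (of_nat (Suc m) + x) / of_nat (Suc m) * ((of_nat m + x) gchoose m)"
  unfolding gbinomial_of_nat_add_eq_pochhammer
  by (simp add: pochhammer_Suc field_simps)

lemma of_nat_choose_mult_choose_shift:
  assumes "i + k \<le> N"
  shows "of_nat (N choose (i + k)) * of_nat ((i + k) choose k)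
    = (of_nat (N choose k) * of_nat ((N - k) choose i) :: 'a :: semiring_1)"
  using choose_mult[of k "i + k" N] assms by (simp flip: of_nat_mult)

lemma of_nat_choose_mult_Suc:
  "of_nat (n choose k) * of_nat (Suc n)
    = (of_nat (Suc n choose k) * (of_nat (Suc n) - of_nat k) :: 'a :: comm_ring_1)"
proof (cases "k \<le> Suc n")
  case True
  have "(Suc n - k) * (Suc n choose k) = Suc n * (n choose k)"
    using binomial_absorb_comp[of "Suc n" k] by simp
  then show ?thesis
    using True by (metis of_nat_diff of_nat_mult mult.commute)
qed (simp add: binomial_eq_0)

lemma sum_alternating_choose_mult_choose:
  "(\<Sum>l=k..N. (-1) ^ (l - k) * (of_nat (N choose l) * of_nat (l choose k)))
    = (if k = N then 1 else (0 :: 'a :: comm_ring_1))"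
proof (cases "k \<le> N")
  case True
  have "(\<Sum>l=k..N. (-1) ^ (l - k) * (of_nat (N choose l) * of_nat (l choose k)))
      = (\<Sum>i=0..N-k. (-1) ^ i * (of_nat (N choose (i + k)) * of_nat ((i + k) choose k)) :: 'a)"
    using sum.shift_bounds_cl_nat_ivl[of "\<lambda>l. (-1) ^ (l - k) * (of_nat (N choose l)
        * of_nat (l choose k)) :: 'a" 0 k "N - k"] True
    by simp
  also have "\<dots> = of_nat (N choose k) * (\<Sum>i\<le>N-k. (-1) ^ i * of_nat ((N - k) choose i))"
    unfolding sum_distrib_left atMost_atLeast0
    by (rule sum.cong) (use True in \<open>auto simp: of_nat_choose_mult_choose_shift mult_ac\<close>)
  also have "\<dots> = (if k = N then 1 else 0)"
    using choose_alternating_sum[of "N - k", where 'a='a] True by (cases "N = k") auto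
  finally show ?thesis .
qed simp

lemma sum_alternating_choose_divide_Suc:
  fixes w :: real
  shows "(\<Sum>i\<le>Suc N. (-1) ^ i * real (Suc N choose i) / (w + real i))
    = (\<Sum>i\<le>N. (-1) ^ i * real (N choose i) / (w + real i))
      - (\<Sum>i\<le>N. (-1) ^ i * real (N choose i) / (w + 1 + real i))"
proof -
  let ?R = "\<Sum>i\<le>N. (-1) ^ i * real (N choose Suc i) / (w + real (Suc i))"
  have "(\<Sum>i\<le>N. (-1) ^ i * real (N choose i) / (w + real i))
      = (\<Sum>i\<le>Suc N. (-1) ^ i * real (N choose i) / (w + real i))"
    by (simp add: sum.atMost_Suc)
  also have "\<dots> = 1 / w - ?R"
    by (subst sum.atMost_Suc_shift) (simp add: sum_negf[symmetric])
  finally have shifted: "?R = 1 / w - (\<Sum>i\<le>N. (-1) ^ i * real (N choose i) / (w + real i))"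
    by simp
  have "(\<Sum>i\<le>Suc N. (-1) ^ i * real (Suc N choose i) / (w + real i))
      = 1 / w + (\<Sum>i\<le>N. (-1) ^ Suc i * real (Suc N choose Suc i) / (w + real (Suc i)))"
    by (subst sum.atMost_Suc_shift) simp
  also have "(\<Sum>i\<le>N. (-1) ^ Suc i * real (Suc N choose Suc i) / (w + real (Suc i)))
      = - (\<Sum>i\<le>N. (-1) ^ i * real (N choose i) / (w + 1 + real i)) - ?R"
    unfolding sum_negf[symmetric] sum_subtractf[symmetric]
    by (rule sum.cong) (simp_all add: add_divide_distrib diff_divide_distrib algebra_simps)
  finally show ?thesis
    unfolding shifted by simp
qed

text \<open>The left-hand side is the Beta integral \<open>B(w, N + 1)\<close> with \<open>(1 - t)\<^sup>N\<close> expanded.\<close>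

lemma sum_alternating_choose_divide:
  fixes w :: real
  assumes "w > 0"
  shows "(\<Sum>i\<le>N. (-1) ^ i * real (N choose i) / (w + real i)) = fact N / pochhammer w (Suc N)"
  using assms
proof (induction N arbitrary: w)
  case 0
  then show ?case by simp
next
  case (Suc N)
  define P Q where "P = pochhammer (w + 1) N" and "Q = w + 1 + real N"
  have "P > 0" "Q > 0" "w + 1 > 0"
    unfolding P_def Q_def using Suc.prems by (simp_all add: pochhammer_pos)
  have "pochhammer w (Suc N) = w * P" "pochhammer (w + 1) (Suc N) = P * Q"
    unfolding P_def Q_def by (rule pochhammer_rec, rule pochhammer_Suc)
  moreover have "pochhammer w (Suc (Suc N)) = w * (P * Q)"
    unfolding pochhammer_rec[of w "Suc N"] \<open>pochhammer (w + 1) (Suc N) = P * Q\<close> ..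
  moreover have "fact N / (w * P) - fact N / (P * Q) = fact N * (Q - w) / (w * (P * Q))"
    using Suc.prems \<open>P > 0\<close> \<open>Q > 0\<close> by (simp add: field_simps)
  moreover have "fact N * (Q - w) = fact (Suc N)"
    unfolding Q_def by (simp add: algebra_simps)
  ultimately show ?case
    unfolding sum_alternating_choose_divide_Suc Suc.IH[OF Suc.prems] Suc.IH[OF \<open>w + 1 > 0\<close>]
    by simp
qed

text \<open>Partial fractions of \<open>1 / binom(m + x, m) = m! / ((x + 1) \<cdots> (x + m))\<close>.\<close>

lemma inverse_gbinomial_partial_fractions:
  fixes x :: real
  assumes "x \<ge> 0" "m \<ge> 1"
  shows "1 / ((real m + x) gchoose m)
    = (\<Sum>l=1..m. (-1) ^ (l - 1) * real (m choose l) * (real l / (x + real l)))"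
proof -
  have sum_from_0: "(\<Sum>l=1..m. (-1) ^ (l - 1) * real (m choose l) * (real l / (x + real l)))
      = - (\<Sum>l\<le>m. (-1) ^ l * real (m choose l) * (real l / (x + real l)))"
  proof -
    have "(\<Sum>l\<le>m. (-1) ^ l * real (m choose l) * (real l / (x + real l)))
       = (\<Sum>l=1..m. (-1) ^ l * real (m choose l) * (real l / (x + real l)))"
      by (rule sum.mono_neutral_right) auto
    also have "\<dots> = - (\<Sum>l=1..m. (-1) ^ (l - 1) * real (m choose l) * (real l / (x + real l)))"
      unfolding sum_negf[symmetric] by (rule sum.cong) (auto simp: power_eq_if)
    finally show ?thesis by simp
  qed
  have alternating: "(\<Sum>l\<le>m. (-1) ^ l * real (m choose l)) = 0"
    using choose_alternating_sum[of m, where 'a=real] assms by simp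
  have "(\<Sum>l\<le>m. (-1) ^ l * real (m choose l) * (real l / (x + real l)))
      = - (1 / ((real m + x) gchoose m))"
  proof (cases "x = 0")
    case True
    have "(\<Sum>l\<le>m. (-1) ^ l * real (m choose l) * (real l / (x + real l)))
        = (\<Sum>l\<le>m. (-1) ^ l * real (m choose l) - (if l = 0 then 1 else 0))"
      by (rule sum.cong) (auto simp: True)
    then show ?thesis
      using alternating True by (simp add: sum_subtractf binomial_gbinomial[symmetric])
  next
    case False
    then have "x > 0" using assms by simp
    have "(\<Sum>l\<le>m. (-1) ^ l * real (m choose l) * (real l / (x + real l)))
        = (\<Sum>l\<le>m. (-1) ^ l * real (m choose l))
          - x * (\<Sum>l\<le>m. (-1) ^ l * real (m choose l) / (x + real l))"
      unfolding sum_distrib_left sum_subtractf[symmetric]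
      by (rule sum.cong) (use \<open>x > 0\<close> in \<open>simp_all add: field_simps add_pos_nonneg\<close>)
    also have "\<dots> = - (x * (fact m / (x * pochhammer (x + 1) m)))"
      unfolding alternating sum_alternating_choose_divide[OF \<open>x > 0\<close>] by (simp add: pochhammer_rec)
    also have "\<dots> = - (1 / ((real m + x) gchoose m))"
      using \<open>x > 0\<close> by (simp add: gbinomial_of_nat_add_eq_pochhammer)
    finally show ?thesis .
  qed
  then show ?thesis
    unfolding sum_from_0 by simp
qed

lemma sum_alternating_choose_mult_choose_divide:
  fixes v :: real
  assumes "v > 0" and "k \<le> n"
  shows "(\<Sum>j=k..n. (-1) ^ (j - k) * (real (n choose j) * real (j choose k)) * (v / (real j + v)))
       = ((real k - 1 + v) gchoose k) / ((real n + v) gchoose n)"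
proof -
  have "(\<Sum>j=k..n. (-1) ^ (j - k) * (real (n choose j) * real (j choose k)) * (v / (real j + v)))
      = (\<Sum>i=0..n-k. (-1) ^ i * (real (n choose (i + k)) * real ((i + k) choose k))
          * (v / (real (i + k) + v)))"
    using sum.shift_bounds_cl_nat_ivl[of "\<lambda>j. (-1) ^ (j - k) * (real (n choose j)
        * real (j choose k)) * (v / (real j + v))" 0 k "n - k"] assms(2)
    by simp
  also have "\<dots> = real (n choose k) * v
      * (\<Sum>i\<le>n-k. (-1) ^ i * real ((n - k) choose i) / (real k + v + real i))"
    unfolding sum_distrib_left atLeast0AtMost
    by (rule sum.cong) (use assms(2) in \<open>auto simp: of_nat_choose_mult_choose_shift algebra_simps\<close>)
  also have "\<dots> = real (n choose k) * v * (fact (n - k) / pochhammer (real k + v) (Suc (n - k)))"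
    using assms(1) by (subst sum_alternating_choose_divide) auto
  finally have sum_eq: "(\<Sum>j=k..n. (-1) ^ (j - k) * (real (n choose j) * real (j choose k))
      * (v / (real j + v))) = real (n choose k) * v * (fact (n - k) / pochhammer (real k + v) (Suc (n - k)))" .
  define P where "P = pochhammer (real k + v) (Suc (n - k))"
  have "pochhammer v k > 0" "P > 0"
    unfolding P_def using assms(1) by (auto intro: pochhammer_pos)
  have "v * pochhammer (v + 1) n = pochhammer v (Suc n)"
    by (simp add: pochhammer_rec)
  also have "\<dots> = pochhammer v k * P"
    unfolding P_def using pochhammer_product[of k "Suc n" v] assms(2)
    by (simp add: Suc_diff_le add.commute)
  finally have gbinomial_n: "(real n + v) gchoose n = pochhammer v k * P / v / fact n"
    unfolding gbinomial_of_nat_add_eq_pochhammer using assms(1) by (simp add: field_simps)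
  have gbinomial_k: "(real k - 1 + v) gchoose k = pochhammer v k / fact k"
    by (subst gbinomial_pochhammer') (simp add: algebra_simps)
  have choose_k: "real (n choose k) = fact n / (fact k * fact (n - k))"
    using binomial_fact[OF assms(2), where 'a=real] by simp
  show ?thesis
    unfolding sum_eq P_def[symmetric] gbinomial_n gbinomial_k choose_k
    using \<open>pochhammer v k > 0\<close> \<open>P > 0\<close> assms(1) by (simp add: field_simps)
qed

section \<open>Falling factorials\<close>

lemma falling_fact_0 [simp]: "falling_fact x 0 = 1"
  unfolding falling_fact_def by simp

lemma falling_fact_Suc: "falling_fact x (Suc s) = falling_fact x s * (x - real s)"
  unfolding falling_fact_def by simp

lemma falling_fact_Suc_left: "falling_fact x (Suc s) = x * falling_fact (x - 1) s"
  unfolding falling_fact_def prod.lessThan_Suc_shift by (simp add: algebra_simps)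

lemma falling_fact_zero_left: "s \<ge> 1 \<Longrightarrow> falling_fact 0 s = 0"
  by (cases s) (simp_all add: falling_fact_Suc_left)

lemma falling_fact_of_nat_Suc:
  "falling_fact (real n) s * real (Suc n) = falling_fact (real (Suc n)) s * (real (Suc n) - real s)"
  using falling_fact_Suc_left[of "real (Suc n)" s] falling_fact_Suc[of "real (Suc n)" s]
  by (simp add: mult.commute)

lemma power_eq_sum_Stirling_falling_fact:
  "x ^ s = (\<Sum>j\<le>s. real (Stirling s j) * falling_fact x j)"
proof (induction s)
  case 0
  then show ?case by simp
next
  case (Suc s)
  have "x ^ Suc s = (\<Sum>j\<le>s. real (Stirling s j) * falling_fact x (Suc j))
      + (\<Sum>j\<le>s. real j * real (Stirling s j) * falling_fact x j)"
    unfolding power_Suc Suc.IH sum_distrib_left sum.distrib[symmetric]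
    by (rule sum.cong) (simp_all add: falling_fact_Suc algebra_simps)
  also have "(\<Sum>j\<le>s. real j * real (Stirling s j) * falling_fact x j)
      = (\<Sum>j\<le>s. real (Suc j) * real (Stirling s (Suc j)) * falling_fact x (Suc j))"
    using sum.atMost_Suc_shift[of "\<lambda>j. real j * real (Stirling s j) * falling_fact x j" s]
    by (simp add: sum.atMost_Suc)
  also have "(\<Sum>j\<le>s. real (Stirling s j) * falling_fact x (Suc j)) + \<dots>
      = (\<Sum>j\<le>s. real (Stirling (Suc s) (Suc j)) * falling_fact x (Suc j))"
    unfolding sum.distrib[symmetric] by (rule sum.cong) (simp_all add: algebra_simps)
  also have "\<dots> = (\<Sum>j\<le>Suc s. real (Stirling (Suc s) j) * falling_fact x j)"
    by (subst sum.atMost_Suc_shift) simp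
  finally show ?case .
qed

section \<open>First-step analysis of the urn\<close>

definition white_prob :: "nat \<Rightarrow> nat \<Rightarrow> nat \<Rightarrow> nat \<Rightarrow> real" where
  "white_prob a d n m = real (a * n) / real (a * n + d * m)"

lemma white_prob_nonneg: "white_prob a d n m \<ge> 0"
  unfolding white_prob_def by simp

lemma white_prob_le_1: "white_prob a d n m \<le> 1"
  unfolding white_prob_def by (auto simp: divide_le_eq_1 simp del: of_nat_add of_nat_mult)

lemma set_pmf_urn: "set_pmf (urn a d n m) \<subseteq> {..a * n}"
proof (induction n arbitrary: m)
  case 0
  then show ?case by simp
next
  case (Suc n)
  note smaller_white = Suc.IH
  show ?case
  proof (induction m)
    case (Suc m)
    have "set_pmf (urn a d (Suc n) (Suc m))
        \<subseteq> set_pmf (urn a d n (Suc m)) \<union> set_pmf (urn a d (Suc n) m)"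
      by (auto split: if_splits)
    also have "\<dots> \<subseteq> {..a * Suc n}"
      using smaller_white[of "Suc m"] Suc.IH by auto
    finally show ?case .
  qed simp
qed

lemma finite_set_pmf_urn: "finite (set_pmf (urn a d n m))"
  using set_pmf_urn by (rule finite_subset) simp

lemma expectation_bind_bernoulli_pmf_if:
  fixes A B :: "'a pmf" and g :: "'a \<Rightarrow> real"
  assumes "0 \<le> p" "p \<le> 1" "finite (set_pmf A)" "finite (set_pmf B)"
  shows "measure_pmf.expectation (bernoulli_pmf p \<bind> (\<lambda>b. if b then A else B)) g
    = p * measure_pmf.expectation A g + (1 - p) * measure_pmf.expectation B g"
  using assms by (subst pmf_expectation_bind[of UNIV]) (auto simp: UNIV_bool)

lemma expectation_urn_Suc_Suc:
  "measure_pmf.expectation (urn a d (Suc n) (Suc m)) g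
    = white_prob a d (Suc n) (Suc m) * measure_pmf.expectation (urn a d n (Suc m)) g
      + (1 - white_prob a d (Suc n) (Suc m)) * measure_pmf.expectation (urn a d (Suc n) m) g"
  unfolding urn.simps(3) white_prob_def[symmetric]
  by (intro expectation_bind_bernoulli_pmf_if white_prob_nonneg white_prob_le_1 finite_set_pmf_urn)

lemma expectation_urn_eqI:
  fixes F :: "nat \<Rightarrow> nat \<Rightarrow> real"
  assumes "\<And>m. F 0 m = g 0"
    and "\<And>n. F (Suc n) 0 = g (a * Suc n)"
    and "\<And>n m. F (Suc n) (Suc m) = white_prob a d (Suc n) (Suc m) * F n (Suc m)
           + (1 - white_prob a d (Suc n) (Suc m)) * F (Suc n) m"
  shows "measure_pmf.expectation (urn a d n m) g = F n m"
proof (induction n arbitrary: m)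
  case 0
  then show ?case using assms(1) by simp
next
  case (Suc n)
  show ?case
    by (induction m) (simp_all add: assms(2,3) expectation_urn_Suc_Suc Suc.IH del: urn.simps(3))
qed

lemma urn_recursion_divide_gbinomial:
  fixes C :: "nat \<Rightarrow> real" and l :: real
  assumes "a \<ge> 1" "d \<ge> 1" "l \<ge> 0"
    and C: "C n * real (Suc n) = C (Suc n) * (real (Suc n) - l)"
  defines "x \<equiv> l * real a / real d"
  shows "C (Suc n) / ((real (Suc m) + x) gchoose Suc m)
    = white_prob a d (Suc n) (Suc m) * (C n / ((real (Suc m) + x) gchoose Suc m))
      + (1 - white_prob a d (Suc n) (Suc m)) * (C (Suc n) / ((real m + x) gchoose m))"
proof -
  define N M where "N = real (Suc n)" and "M = real (Suc m)"
  define B where "B = (real m + x) gchoose m"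
  have "x \<ge> 0" "B > 0" "M > 0" "N > 0" "real a > 0" "real d > 0"
    unfolding x_def B_def M_def N_def using assms(1-3) by (auto intro: gbinomial_of_nat_add_pos)
  have B_Suc: "(real (Suc m) + x) gchoose Suc m = (M + x) / M * B"
    unfolding B_def M_def by (rule gbinomial_of_nat_add_Suc)
  have p: "white_prob a d (Suc n) (Suc m) = real a * N / (real a * N + real d * M)"
    unfolding white_prob_def N_def M_def by (simp add: algebra_simps)
  have "real d * x = l * real a"
    unfolding x_def using \<open>real d > 0\<close> by simp
  have "real a * N * C n + real d * M * (C (Suc n) * ((M + x) / M))
      = real a * (C n * N) + C (Suc n) * (real d * M + real d * x)"
    using \<open>M > 0\<close> by (simp add: field_simps)
  also have "\<dots> = real a * (C (Suc n) * (N - l)) + C (Suc n) * (real d * M + l * real a)"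
    unfolding C[folded N_def] \<open>real d * x = l * real a\<close> ..
  also have "\<dots> = (real a * N + real d * M) * C (Suc n)"
    by (simp add: algebra_simps)
  finally have key: "real a * N * C n + real d * M * (C (Suc n) * ((M + x) / M))
      = (real a * N + real d * M) * C (Suc n)" .
  define D G where "D = real a * N + real d * M" and "G = (M + x) / M * B"
  have "D > 0" "G > 0"
    unfolding D_def G_def using \<open>B > 0\<close> \<open>M > 0\<close> \<open>N > 0\<close> \<open>x \<ge> 0\<close> \<open>real a > 0\<close> \<open>real d > 0\<close>
    by (simp_all add: add_pos_pos)
  have "1 - real a * N / D = real d * M / D"
    unfolding D_def using \<open>D > 0\<close>[unfolded D_def] by (simp add: field_simps)
  moreover have "C (Suc n) / B = C (Suc n) * ((M + x) / M) / G"
    unfolding G_def using \<open>M > 0\<close> \<open>x \<ge> 0\<close> by simp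
  ultimately have "real a * N / D * (C n / G) + (1 - real a * N / D) * (C (Suc n) / B)
      = (real a * N * C n + real d * M * (C (Suc n) * ((M + x) / M))) / (D * G)"
    by (simp add: add_divide_distrib)
  also have "\<dots> = C (Suc n) / G"
    unfolding key D_def[symmetric] using \<open>D > 0\<close> by simp
  finally show ?thesis
    unfolding B_Suc p B_def[symmetric] D_def[symmetric] G_def[symmetric] ..
qed

section \<open>Distribution and moments\<close>

lemma pmf_urn_mult:
  assumes "a \<ge> 1" "d \<ge> 1"
  shows "pmf (urn a d n m) (a * k)
    = (\<Sum>l=k..n. (-1) ^ (l - k) * (real (n choose l) * real (l choose k))
        / ((real m + real l * real a / real d) gchoose m))"
proof -
  let ?C = "\<lambda>n l. (-1) ^ (l - k) * (real (n choose l) * real (l choose k))"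
  let ?t = "\<lambda>n m l. ?C n l / ((real m + real l * real a / real d) gchoose m)"
  have "pmf (urn a d n m) (a * k) = measure_pmf.expectation (urn a d n m) (indicator {a * k})"
    by (simp add: measure_pmf_single)
  also have "\<dots> = (\<Sum>l=k..n. ?t n m l)"
  proof (rule expectation_urn_eqI)
    fix m
    show "(\<Sum>l=k..0. ?t 0 m l) = indicator {a * k} 0"
      using assms by (cases k) (auto simp: binomial_gbinomial[symmetric])
  next
    fix n
    have "a * Suc n = a * k \<longleftrightarrow> k = Suc n"
      using assms mult_left_cancel[of a "Suc n" k] by auto
    then show "(\<Sum>l=k..Suc n. ?t (Suc n) 0 l) = indicator {a * k} (a * Suc n)"
      by (simp add: sum_alternating_choose_mult_choose indicator_def del: mult_Suc_right)
  next
    fix n m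
    have step: "?t (Suc n) (Suc m) l = white_prob a d (Suc n) (Suc m) * ?t n (Suc m) l
        + (1 - white_prob a d (Suc n) (Suc m)) * ?t (Suc n) m l" for l
    proof (rule urn_recursion_divide_gbinomial[where C = "\<lambda>n. ?C n l" and l = "real l", OF assms])
      show "?C n l * real (Suc n) = ?C (Suc n) l * (real (Suc n) - real l)"
        using of_nat_choose_mult_Suc[of n l, where 'a=real]
        by (simp add: mult.commute mult.left_commute)
    qed simp
    have extend: "(\<Sum>l=k..n. ?t n (Suc m) l) = (\<Sum>l=k..Suc n. ?t n (Suc m) l)"
      by (cases "k \<le> Suc n") (simp_all add: atLeastAtMostSuc_conv)
    show "(\<Sum>l=k..Suc n. ?t (Suc n) (Suc m) l)
      = white_prob a d (Suc n) (Suc m) * (\<Sum>l=k..n. ?t n (Suc m) l)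
        + (1 - white_prob a d (Suc n) (Suc m)) * (\<Sum>l=k..Suc n. ?t (Suc n) m l)"
      unfolding extend sum_distrib_left sum.distrib[symmetric] by (rule sum.cong[OF refl step])
  qed
  finally show ?thesis .
qed

lemma expectation_urn_falling_fact:
  assumes "a \<ge> 1" "d \<ge> 1"
  shows "measure_pmf.expectation (urn a d n m) (\<lambda>y. falling_fact (real y / real a) s)
    = falling_fact (real n) s / ((real m + real a * real s / real d) gchoose m)"
proof (rule expectation_urn_eqI)
  fix m
  show "falling_fact (real 0) s / ((real m + real a * real s / real d) gchoose m)
    = falling_fact (real 0 / real a) s"
    by (cases s) (simp_all add: falling_fact_zero_left binomial_gbinomial[symmetric])
next
  fix n
  show "falling_fact (real (Suc n)) s / ((real 0 + real a * real s / real d) gchoose 0)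
    = falling_fact (real (a * Suc n) / real a) s"
    using assms by (subst of_nat_mult) (simp del: of_nat_Suc)
next
  fix n m
  let ?x = "real a * real s / real d"
  show "falling_fact (real (Suc n)) s / ((real (Suc m) + ?x) gchoose Suc m)
    = white_prob a d (Suc n) (Suc m) * (falling_fact (real n) s / ((real (Suc m) + ?x) gchoose Suc m))
      + (1 - white_prob a d (Suc n) (Suc m)) * (falling_fact (real (Suc n)) s / ((real m + ?x) gchoose m))"
    using urn_recursion_divide_gbinomial[where C = "\<lambda>n. falling_fact (real n) s" and l = "real s",
        OF assms of_nat_0_le_iff falling_fact_of_nat_Suc]
    by (simp add: mult.commute)
qed

lemma expectation_urn_power:
  assumes "a \<ge> 1" "d \<ge> 1"
  shows "measure_pmf.expectation (urn a d n m) (\<lambda>y. (real y / real a) ^ s)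
    = (\<Sum>j=0..s. real (Stirling s j) * falling_fact (real n) j
        / ((real m + real a * real j / real d) gchoose m))"
proof -
  have "measure_pmf.expectation (urn a d n m) (\<lambda>y. (real y / real a) ^ s)
     = (\<Sum>j\<le>s. measure_pmf.expectation (urn a d n m)
          (\<lambda>y. real (Stirling s j) * falling_fact (real y / real a) j))"
    unfolding power_eq_sum_Stirling_falling_fact
    by (rule Bochner_Integration.integral_sum) (rule integrable_measure_pmf_finite[OF finite_set_pmf_urn])
  then show ?thesis
    by (simp add: atLeast0AtMost expectation_urn_falling_fact[OF assms])
qed

text \<open>The two formulas for the distribution are exchanged by expanding \<open>1 / binom(m + l a / d, m)\<close>
  into partial fractions and summing over \<open>l\<close> first.\<close>

lemma urn_distribution_dual_sum:
  fixes a d n m k :: nat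
  assumes "a \<ge> 1" "d \<ge> 1" "m \<ge> 1" "k \<le> n"
  shows "(\<Sum>j=k..n. (-1) ^ (j - k) * (real (n choose j) * real (j choose k))
          / ((real m + real j * real a / real d) gchoose m))
    = (\<Sum>l=1..m. (-1) ^ (l - 1) * (real (m choose l)
          * ((real k - 1 + real l * real d / real a) gchoose k))
          / ((real n + real l * real d / real a) gchoose n))"
proof -
  let ?T = "\<lambda>j. (-1) ^ (j - k) * (real (n choose j) * real (j choose k))"
  let ?v = "\<lambda>l. real l * real d / real a"
  have fraction: "real l / (real j * real a / real d + real l) = ?v l / (real j + ?v l)"
    if "l \<ge> 1" for l j
    using assms(1,2) that by (simp add: field_simps)
  have "(\<Sum>j=k..n. ?T j / ((real m + real j * real a / real d) gchoose m))
     = (\<Sum>j=k..n. ?T j * (\<Sum>l=1..m. (-1) ^ (l - 1) * real (m choose l)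
          * (real l / (real j * real a / real d + real l))))"
  proof (rule sum.cong[OF refl])
    fix j
    have inverse: "1 / ((real m + real j * real a / real d) gchoose m) = (\<Sum>l=1..m. (-1) ^ (l - 1)
        * real (m choose l) * (real l / (real j * real a / real d + real l)))"
      using assms(3) by (intro inverse_gbinomial_partial_fractions) simp_all
    show "?T j / ((real m + real j * real a / real d) gchoose m) = ?T j * (\<Sum>l=1..m.
        (-1) ^ (l - 1) * real (m choose l) * (real l / (real j * real a / real d + real l)))"
      by (simp only: flip: inverse) simp
  qed
  also have "\<dots> = (\<Sum>l=1..m. (-1) ^ (l - 1) * real (m choose l)
        * (\<Sum>j=k..n. ?T j * (?v l / (real j + ?v l))))"
    unfolding sum_distrib_left
    by (subst sum.swap) (rule sum.cong[OF refl], rule sum.cong[OF refl], simp add: fraction)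
  also have "\<dots> = (\<Sum>l=1..m. (-1) ^ (l - 1) * (real (m choose l)
          * ((real k - 1 + ?v l) gchoose k)) / ((real n + ?v l) gchoose n))"
  proof (rule sum.cong[OF refl])
    fix l
    assume "l \<in> {1..m}"
    then have "?v l > 0"
      using assms(1,2) by simp
    then show "(-1) ^ (l - 1) * real (m choose l) * (\<Sum>j=k..n. ?T j * (?v l / (real j + ?v l)))
      = (-1) ^ (l - 1) * (real (m choose l) * ((real k - 1 + ?v l) gchoose k))
        / ((real n + ?v l) gchoose n)"
      by (simp only: sum_alternating_choose_mult_choose_divide[OF _ assms(4)]) simp
  qed
  finally show ?thesis .
qed

theorem corollary1:
  fixes a d n m :: nat
  assumes "a \<ge> 1" and "d \<ge> 1" and "n \<ge> 1" and "m \<ge> 1"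
  shows "(\<forall>k \<le> n.
      pmf (urn a d n m) (a * k) =
        (\<Sum>l = 1..m. (-1) ^ (l - 1) * (real (m choose l)
           * ((real k - 1 + real l * real d / real a) gchoose k))
           / ((real n + real l * real d / real a) gchoose n))
    \<and> pmf (urn a d n m) (a * k) =
        (\<Sum>l = k..n. (-1) ^ (l - k) * (real (n choose l) * real (l choose k))
           / ((real m + real l * real a / real d) gchoose m))) \<and>
    (\<forall>s \<ge> 1.
      measure_pmf.expectation (urn a d n m) (\<lambda>y. falling_fact (real y / real a) s) =
        falling_fact (real n) s / ((real m + real a * real s / real d) gchoose m)
    \<and> measure_pmf.expectation (urn a d n m) (\<lambda>y. (real y / real a) ^ s) =
        (\<Sum>j = 0..s. real (Stirling s j) * falling_fact (real n) j
           / ((real m + real a * real j / real d) gchoose m)))"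
  using pmf_urn_mult[OF assms(1,2)] urn_distribution_dual_sum[OF assms(1,2,4)]
    expectation_urn_falling_fact[OF assms(1,2)] expectation_urn_power[OF assms(1,2)]
  by simp

end
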